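(* Let $n, k \in \mathbb{N}$, $m \in \mathbb{Z}$ with $0 \le m \le n-1$, and let $F \colon \mathcal{K}_k^n \to \mathbb{Z}^{n-1}$ be such that $\|F(K') - F(K)\|_\infty \le 1$ for all $K, K' \in \mathcal{K}_k^n$ with $\dim(K \cap K') \ge m$. Then $\|F(K') - F(K)\|_\infty \le m+1$ for all $K, K' \in \mathcal{K}_k^n$ with $K \cap K' \ne \emptyset$.
   Context: $\mathcal{K}_k^n = \{\prod_{s=1}^n [\frac{i_s-1}{k}, \frac{i_s}{k}] : i_s \in \{1,\dots,k\}\}$ is the division of $[0,1]^n$ into $k^n$ closed cubes; $\dim$ is topological dimension (the dimension of the common face of two cubes); $\mathbb{Z}^0=\{0\}$. *)

theory Defs
  imports "HOL-Analysis.Analysis"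
begin

text \<open>The cube of the k-division of [0,1]^n with multi-index i (entries in 1..k).
  The dimension n is CARD('n).\<close>
definition grid_cube :: "nat \<Rightarrow> ('n::finite \<Rightarrow> nat) \<Rightarrow> (real^'n) set" where
  "grid_cube k i = {x. \<forall>s. (real (i s) - 1) / real k \<le> x $ s \<and> x $ s \<le> real (i s) / real k}"

definition grid_cubes :: "nat \<Rightarrow> (real^'n::finite) set set" where
  "grid_cubes k = {grid_cube k i | i. \<forall>s. 1 \<le> i s \<and> i s \<le> k}"

end

theory Submission
  imports Defs
begin

text \<open>Index the cubes by their integer corners.  Two cubes meet iff their indices differ by at most
  one in every coordinate, and their intersection then has dimension at least the number of
  coordinates where the indices agree.  Hence cubes whose indices differ in at most \<open>n - m\<close>
  coordinates meet in a face of dimension \<open>\<ge> m\<close>, so \<open>F\<close> moves by at most one between them.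
  Walking from \<open>K\<close> to \<open>K'\<close> by changing \<open>n - m\<close> coordinates at a time takes
  \<open>\<lceil>n / (n - m)\<rceil> \<le> m + 1\<close> steps.\<close>

definition grid_indices :: "nat \<Rightarrow> ('n::finite \<Rightarrow> nat) set" where
  "grid_indices k = {i. \<forall>s. 1 \<le> i s \<and> i s \<le> k}"

lemma grid_cubes_eq_image: "grid_cubes k = grid_cube k ` grid_indices k"
  unfolding grid_cubes_def grid_indices_def by blast

lemma hamming_chain_bound:
  fixes g :: "('a::finite \<Rightarrow> 'b) \<Rightarrow> int"
  assumes step: "\<And>i i'. i \<in> A \<Longrightarrow> i' \<in> A \<Longrightarrow> (\<forall>s. R (i s) (i' s)) \<Longrightarrow>
      card {s. i s \<noteq> i' s} \<le> N \<Longrightarrow> \<bar>g i' - g i\<bar> \<le> 1"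
    and refl: "\<And>x. R x x"
    and mix: "\<And>i i' G. i \<in> A \<Longrightarrow> i' \<in> A \<Longrightarrow> (\<lambda>s. if s \<in> G then i' s else i s) \<in> A"
  shows "i \<in> A \<Longrightarrow> i' \<in> A \<Longrightarrow> \<forall>s. R (i s) (i' s) \<Longrightarrow>
      card {s. i s \<noteq> i' s} \<le> (t + 1) * N \<Longrightarrow> \<bar>g i' - g i\<bar> \<le> int t + 1"
proof (induction t arbitrary: i i')
  case 0
  then show ?case using step by auto
next
  case (Suc t)
  define D where "D = {s. i s \<noteq> i' s}"
  show ?case
  proof (cases "card D \<le> N")
    case True
    then show ?thesis using step[OF Suc.prems(1-3)] by (simp add: D_def)
  next
    case False
    then obtain G where G: "G \<subseteq> D" "card G = N"
      using obtain_subset_with_card_n[of N D] by auto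
    define i'' where "i'' = (\<lambda>s. if s \<in> G then i' s else i s)"
    have i'': "i'' \<in> A" unfolding i''_def using mix[OF Suc.prems(1,2)] .
    have R: "\<forall>s. R (i s) (i'' s)" "\<forall>s. R (i'' s) (i' s)"
      using Suc.prems(3) refl by (simp_all add: i''_def)
    have "{s. i s \<noteq> i'' s} = G" using G unfolding i''_def D_def by auto
    then have first: "\<bar>g i'' - g i\<bar> \<le> 1" using step[OF Suc.prems(1) i'' R(1)] G(2) by simp
    have "{s. i'' s \<noteq> i' s} = D - G" unfolding i''_def D_def by auto
    moreover have "card (D - G) \<le> (t + 1) * N"
      using G Suc.prems(4) by (simp add: D_def card_Diff_subset finite_subset)
    ultimately have "\<bar>g i' - g i''\<bar> \<le> int t + 1" using Suc.IH[OF i'' Suc.prems(2) R(2)] by simp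
    with first show ?thesis by simp
  qed
qed

lemma mem_grid_cube_Int:
  "x \<in> grid_cube k i \<inter> grid_cube k i' \<longleftrightarrow>
    (\<forall>s. (real (max (i s) (i' s)) - 1) / real k \<le> x $ s \<and> x $ s \<le> real (min (i s) (i' s)) / real k)"
  unfolding grid_cube_def
  by (simp add: of_nat_max of_nat_min max_diff_distrib_left max_divide_distrib_right
      min_divide_distrib_right) blast

lemma grid_cube_Int_nonempty_imp_adjacent:
  assumes "k > 0" "grid_cube k i \<inter> grid_cube k i' \<noteq> {}"
  shows "i' s \<le> i s + 1 \<and> i s \<le> i' s + 1"
proof -
  obtain x where "x \<in> grid_cube k i \<inter> grid_cube k i'" using assms(2) by blast
  then have "(real (max (i s) (i' s)) - 1) / real k \<le> x $ s" "x $ s \<le> real (min (i s) (i' s)) / real k"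
    unfolding mem_grid_cube_Int by blast+
  then have "(real (max (i s) (i' s)) - 1) / real k \<le> real (min (i s) (i' s)) / real k"
    by (rule order_trans)
  then have "real (max (i s) (i' s)) - 1 \<le> real (min (i s) (i' s))"
    using assms(1) by (simp add: divide_le_cancel)
  then show ?thesis by (simp add: max_def min_def split: if_splits)
qed

lemma aff_dim_grid_cube_Int_ge:
  fixes i i' :: "'n::finite \<Rightarrow> nat"
  assumes k: "k > 0" and adj: "\<forall>s. i' s \<le> i s + 1 \<and> i s \<le> i' s + 1"
  shows "int (card {s. i s = i' s}) \<le> aff_dim (grid_cube k i \<inter> grid_cube k i')"
proof -
  let ?S = "grid_cube k i \<inter> grid_cube k i'"
  define E where "E = {s. i s = i' s}"
  define p :: "real^'n" where "p = (\<chi> s. (real (max (i s) (i' s)) - 1) / real k)"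
  have bounds: "(real (max (i t) (i' t)) - 1) / real k \<le> real (min (i t) (i' t)) / real k" for t
  proof -
    have "real (max (i t) (i' t)) - 1 \<le> real (min (i t) (i' t))"
      using adj[rule_format, of t] by (simp add: max_def min_def)
    then show ?thesis by (simp add: divide_right_mono)
  qed
  have "p \<in> ?S"
    unfolding mem_grid_cube_Int p_def using bounds by simp
  define T where "T = (+) (- p) ` ?S"
  have aff: "aff_dim ?S = int (dim T)"
    unfolding T_def using \<open>p \<in> ?S\<close> by (rule aff_dim_eq_dim[OF hull_inc])
  \<comment> \<open>Along each coordinate in \<open>E\<close> the intersection has full width \<open>1/k\<close>.\<close>
  have edge: "(1 / real k) *\<^sub>R axis s 1 \<in> T" if "s \<in> E" for s
  proof -
    have "p + (1 / real k) *\<^sub>R axis s 1 \<in> ?S"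
      unfolding mem_grid_cube_Int
    proof
      fix t
      show "(real (max (i t) (i' t)) - 1) / real k \<le> (p + (1 / real k) *\<^sub>R axis s 1) $ t \<and>
            (p + (1 / real k) *\<^sub>R axis s 1) $ t \<le> real (min (i t) (i' t)) / real k"
      proof (cases "t = s")
        case True
        have "(real (i s) - 1) / real k + 1 / real k = real (i s) / real k"
          by (simp add: diff_divide_distrib)
        then show ?thesis using True \<open>s \<in> E\<close> k by (simp add: p_def E_def axis_def divide_right_mono)
      next
        case False
        then show ?thesis using bounds[of t] by (simp add: p_def axis_def)
      qed
    qed
    then show ?thesis unfolding T_def by (rule image_eqI[rotated]) simp
  qed
  define B where "B = (\<lambda>s. axis s (1::real)) ` E"
  have "B \<subseteq> span T"
  proof
    fix b assume "b \<in> B"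
    then obtain s where s: "s \<in> E" "b = axis s 1" unfolding B_def by auto
    have "real k *\<^sub>R ((1 / real k) *\<^sub>R axis s (1::real)) \<in> span T"
      using edge[OF s(1)] by (intro span_mul span_base)
    then show "b \<in> span T" using s k by simp
  qed
  moreover have "independent B"
    by (rule independent_mono[OF independent_Basis]) (auto simp: B_def Basis_vec_def)
  ultimately have "card B \<le> dim (span T)"
    by (rule independent_card_le_dim)
  moreover have "card B = card E" unfolding B_def
    by (rule card_image) (auto simp: inj_on_def axis_eq_axis)
  ultimately show ?thesis using aff E_def by simp
qed

lemma card_disagree_add_card_agree:
  fixes i i' :: "'a::finite \<Rightarrow> 'b"
  shows "card {s. i s \<noteq> i' s} + card {s. i s = i' s} = CARD('a)"
proof -
  have "card ({s. i s \<noteq> i' s} \<union> {s. i s = i' s}) = card {s. i s \<noteq> i' s} + card {s. i s = i' s}"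
    by (rule card_Un_disjoint) auto
  moreover have "{s. i s \<noteq> i' s} \<union> {s. i s = i' s} = UNIV" by auto
  ultimately show ?thesis by simp
qed

lemma le_Suc_mult_diff:
  fixes a n :: nat
  assumes "a < n"
  shows "n \<le> (a + 1) * (n - a)"
proof -
  have "a * 1 \<le> a * (n - a)" using assms by (intro mult_le_mono2) linarith
  moreover have "(a + 1) * (n - a) = (n - a) + a * (n - a)" by simp
  ultimately show ?thesis using assms by linarith
qed

lemma grid_cube_oscillation_bound:
  fixes g :: "('n::finite \<Rightarrow> nat) \<Rightarrow> int" and a :: nat
  assumes "a < CARD('n)"
    and step: "\<And>i i'. i \<in> grid_indices k \<Longrightarrow> i' \<in> grid_indices k \<Longrightarrow>
      int a \<le> aff_dim (grid_cube k i \<inter> grid_cube k i') \<Longrightarrow> \<bar>g i' - g i\<bar> \<le> 1"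
    and i: "i \<in> grid_indices k" and i': "i' \<in> grid_indices k"
    and meet: "grid_cube k i \<inter> grid_cube k i' \<noteq> {}"
  shows "\<bar>g i' - g i\<bar> \<le> int a + 1"
proof -
  have "1 \<le> i s \<and> i s \<le> k" for s using i by (simp add: grid_indices_def)
  from this[of undefined] have k: "k > 0" by linarith
  let ?R = "\<lambda>x y. y \<le> x + 1 \<and> x \<le> (y::nat) + 1"
  have small_step: "\<bar>g j' - g j\<bar> \<le> 1"
    if "j \<in> grid_indices k" "j' \<in> grid_indices k" "\<forall>s. ?R (j s) (j' s)"
      "card {s. j s \<noteq> j' s} \<le> CARD('n) - a" for j j'
  proof (rule step[OF that(1,2)])
    have "a \<le> card {s. j s = j' s}"
      using card_disagree_add_card_agree[of j j'] that(4) assms(1) by linarith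
    then show "int a \<le> aff_dim (grid_cube k j \<inter> grid_cube k j')"
      using aff_dim_grid_cube_Int_ge[OF k that(3)] by linarith
  qed
  have mix: "(\<lambda>s. if s \<in> G then j' s else j s) \<in> grid_indices k"
    if "j \<in> grid_indices k" "j' \<in> grid_indices k" for j j' G
    using that unfolding grid_indices_def by auto
  have adjacent: "\<forall>s. ?R (i s) (i' s)"
    by (intro allI grid_cube_Int_nonempty_imp_adjacent[OF k meet])
  have "card {s. i s \<noteq> i' s} \<le> (a + 1) * (CARD('n) - a)"
    using card_disagree_add_card_agree[of i i'] le_Suc_mult_diff[OF assms(1)] by linarith
  then show ?thesis
    by (rule hamming_chain_bound[where A = "grid_indices k" and R = ?R and g = g, rotated -1])
      (use small_step mix i i' adjacent in auto)
qed

theorem mainTheorem6: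
  fixes F :: "(real^'n::finite) set \<Rightarrow> (nat \<Rightarrow> int)" and k :: nat and m :: int
  assumes "0 \<le> m" and "m \<le> int CARD('n) - 1"
    and "\<forall>K\<in>grid_cubes k. \<forall>K'\<in>grid_cubes k. aff_dim (K \<inter> K') \<ge> m \<longrightarrow>
           (\<forall>j < CARD('n) - 1. \<bar>F K' j - F K j\<bar> \<le> 1)"
  shows "\<forall>K\<in>grid_cubes k. \<forall>K'\<in>grid_cubes k. K \<inter> K' \<noteq> {} \<longrightarrow>
           (\<forall>j < CARD('n) - 1. \<bar>F K' j - F K j\<bar> \<le> m + 1)"
proof (intro ballI impI allI)
  fix K K' :: "(real^'n) set" and j :: nat
  assume K: "K \<in> grid_cubes k" and K': "K' \<in> grid_cubes k" and meet: "K \<inter> K' \<noteq> {}"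
    and j: "j < CARD('n) - 1"
  obtain i i' where i: "i \<in> grid_indices k" "K = grid_cube k i"
    and i': "i' \<in> grid_indices k" "K' = grid_cube k i'"
    using K K' unfolding grid_cubes_eq_image by blast
  have bound: "nat m < CARD('n)" using assms(1,2) by linarith
  have step: "\<bar>F (grid_cube k l') j - F (grid_cube k l) j\<bar> \<le> 1"
    if "l \<in> grid_indices k" "l' \<in> grid_indices k"
      "int (nat m) \<le> aff_dim (grid_cube k l \<inter> grid_cube k l')" for l l'
  proof -
    have "grid_cube k l \<in> grid_cubes k" "grid_cube k l' \<in> grid_cubes k"
      using that(1,2) by (simp_all add: grid_cubes_eq_image)
    then show ?thesis using assms(3) j that(3) assms(1) by simp
  qed
  have "grid_cube k i \<inter> grid_cube k i' \<noteq> {}" using meet i(2) i'(2) by simp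
  from grid_cube_oscillation_bound[OF bound step i(1) i'(1) this]
  show "\<bar>F K' j - F K j\<bar> \<le> m + 1" using i(2) i'(2) assms(1) by simp
qed

end
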